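(* Let $j_1'$ be the first positive zero of $J_1'$. For every fixed $t\in(0,j_1')$, the function $s\mapsto \frac{J_s(t)}{tJ_s'(t)}$ satisfies $$\frac{d}{ds}\Big(\frac{J_s(t)}{tJ_s'(t)}\Big)<0$$ for all real $s\ge1$.
   Context: $J_s$ denotes the Bessel function of the first kind of order $s$, and $J_s'$ its derivative with respect to its argument. *)

theory Defs
  imports "HOL-Analysis.Analysis"
begin

text \<open>Bessel function of the first kind of real order s, for t > 0:
  J_s(t) = sum_k (-1)^k / (k! Gamma(k+s+1)) (t/2)^(2k+s),
  written with the reciprocal Gamma function (entire, so no poles issue).\<close>
definition besselJ :: "real \<Rightarrow> real \<Rightarrow> real" where
  "besselJ s t = (\<Sum>k. (-1) ^ k * rGamma (real k + s + 1) / fact k * (t / 2) powr (2 * real k + s))"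

definition besselJ' :: "real \<Rightarrow> real \<Rightarrow> real" where
  "besselJ' s t = deriv (besselJ s) t"

definition j1' :: real where
  "j1' = Inf {x. 0 < x \<and> besselJ' 1 x = 0}"

end

theory Submission
  imports Defs
begin

(* Put u = t^2/4. Then J_s(t) = (t/2)^s G_s(u) / Gamma(s+1) and t J_s'(t) = (t/2)^s H_s(u) / Gamma(s+1)
   with H_s = s G_s + 2u dG_s/du, so the quotient is G_s(u) / H_s(u), whose s-derivative is -W / H^2
   where W = G dH/ds - H dG/ds = G^2 + 2u (G d^2G/ds du - dG/du dG/ds).
   For s >= 1 and 0 <= u <= 1 each of the power series G, dG/du, dG/ds, d^2G/ds du is alternating
   with decreasing terms: every term sequence is a product of one that at least halves at each step
   and one that at most doubles. Leibniz's estimates then give G > 0, dG/du <= 0, dG/ds >= 0 and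
   d^2G/ds du >= 0, hence W > 0. The same estimates give H_1(1) < 0, while H_1(0) = 1; by the
   intermediate value theorem j_1' <= 2 (so u <= 1) and H_1(u) > 0 below j_1'. Finally W > 0 says
   that H/G increases in s, so H_s(u) > 0 for all s >= 1 and the derivative -W / H^2 exists and is
   negative. *)

section \<open>Alternating series and termwise differentiation\<close>

lemma alternating_series_bounds:
  fixes a :: "nat \<Rightarrow> real"
  assumes nonneg: "\<And>n. 0 \<le> a n" and antitone: "\<And>n. a (Suc n) \<le> a n" and "a \<longlonglongrightarrow> 0"
  shows "summable (\<lambda>n. (-1)^n * a n)"
    and "0 \<le> (\<Sum>n. (-1)^n * a n)"
    and "a 0 - a 1 \<le> (\<Sum>n. (-1)^n * a n)"
    and "(\<Sum>n. (-1)^n * a n) \<le> a 0 - a 1 + a 2"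
proof -
  note Leibniz = summable_Leibniz'[OF \<open>a \<longlonglongrightarrow> 0\<close> nonneg antitone]
  show "summable (\<lambda>n. (-1)^n * a n)"
    by (rule Leibniz(1))
  show "0 \<le> (\<Sum>n. (-1)^n * a n)"
    using Leibniz(2)[of 0] by simp
  show "a 0 - a 1 \<le> (\<Sum>n. (-1)^n * a n)"
    using Leibniz(2)[of 1] by (simp add: numeral_2_eq_2)
  show "(\<Sum>n. (-1)^n * a n) \<le> a 0 - a 1 + a 2"
    using Leibniz(4)[of 1] by (simp add: numeral_3_eq_3 numeral_2_eq_2)
qed

lemma mult_Suc_le_of_halving:
  fixes a c :: "nat \<Rightarrow> real"
  assumes "\<And>k. 0 \<le> a k" "\<And>k. 2 * a (Suc k) \<le> a k" "\<And>k. 0 \<le> c k" "\<And>k. c (Suc k) \<le> 2 * c k"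
  shows "a (Suc k) * c (Suc k) \<le> a k * c k"
proof -
  have "a (Suc k) * c (Suc k) \<le> a (Suc k) * (2 * c k)"
    by (rule mult_left_mono[OF assms(4) assms(1)])
  also have "\<dots> = (2 * a (Suc k)) * c k"
    by simp
  also have "\<dots> \<le> a k * c k"
    using assms(2,3) by (rule mult_right_mono)
  finally show ?thesis .
qed

lemma DERIV_powser_wrt_parameter:
  fixes c c' :: "real \<Rightarrow> nat \<Rightarrow> real"
  assumes S: "open S" "convex S" "\<sigma> \<in> S"
    and c': "\<And>y k. y \<in> S \<Longrightarrow> ((\<lambda>\<sigma>. c \<sigma> k) has_real_derivative c' y k) (at y)"
    and bound: "\<And>y k. y \<in> S \<Longrightarrow> \<bar>c' y k\<bar> \<le> C^k / fact k"
    and "summable (\<lambda>k. c \<sigma> k * u^k)"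
  shows "((\<lambda>\<sigma>. \<Sum>k. c \<sigma> k * u^k) has_real_derivative (\<Sum>k. c' \<sigma> k * u^k)) (at \<sigma>)"
proof (rule has_field_derivative_series'(2)[OF \<open>convex S\<close>])
  show "((\<lambda>\<sigma>. c \<sigma> k * u^k) has_real_derivative c' y k * u^k) (at y within S)" if "y \<in> S" for k y
    by (rule DERIV_cmult_right[OF has_field_derivative_at_within[OF c'[OF that]]])
  have term_bound: "norm (c' y k * u^k) \<le> inverse (fact k) * (C * \<bar>u\<bar>)^k" if "y \<in> S" for k y
    using mult_right_mono[OF bound[OF that, of k], of "\<bar>u\<bar>^k"]
    by (simp add: abs_mult power_abs power_mult_distrib divide_inverse mult_ac)
  show "uniformly_convergent_on S (\<lambda>n y. \<Sum>k<n. c' y k * u^k)"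
    by (rule Weierstrass_m_test'[OF term_bound summable_exp])
qed (use S assms(6) in \<open>auto simp: interior_open\<close>)

section \<open>Coefficients of the Bessel series\<close>

definition bessel_coeff :: "real \<Rightarrow> nat \<Rightarrow> real" where
  "bessel_coeff \<sigma> k = 1 / (fact k * pochhammer (\<sigma> + 1) k)"

definition pochhammer_logderiv :: "real \<Rightarrow> nat \<Rightarrow> real" where
  "pochhammer_logderiv \<sigma> k = (\<Sum>j<k. 1 / (\<sigma> + 1 + real j))"

lemma pochhammer_ge_1: "(0::real) \<le> \<sigma> \<Longrightarrow> 1 \<le> pochhammer (\<sigma> + 1) k"
proof (induction k)
  case (Suc k)
  have "(1::real) * 1 \<le> pochhammer (\<sigma> + 1) k * (\<sigma> + 1 + real k)"
    using Suc by (intro mult_mono) auto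
  then show ?case by (simp add: pochhammer_Suc)
qed simp

lemma bessel_coeff_pos: "-1 < \<sigma> \<Longrightarrow> 0 < bessel_coeff \<sigma> k"
  unfolding bessel_coeff_def by (simp add: pochhammer_pos)

lemma bessel_coeff_le: "0 \<le> \<sigma> \<Longrightarrow> bessel_coeff \<sigma> k \<le> 1 / fact k"
  unfolding bessel_coeff_def using pochhammer_ge_1[of \<sigma> k]
  by (simp add: divide_simps)

lemma bessel_coeff_0 [simp]: "bessel_coeff \<sigma> 0 = 1"
  by (simp add: bessel_coeff_def)

lemma bessel_coeff_Suc:
  "bessel_coeff \<sigma> (Suc k) = bessel_coeff \<sigma> k / ((real k + 1) * (\<sigma> + 1 + real k))"
  unfolding bessel_coeff_def by (simp add: pochhammer_Suc algebra_simps)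

lemma bessel_coeff_div:
  "bessel_coeff \<sigma> k / (\<sigma> + 1 + real k) = (real k + 1) * bessel_coeff \<sigma> (Suc k)"
  unfolding bessel_coeff_Suc by simp

lemma pochhammer_logderiv_Suc:
  "pochhammer_logderiv \<sigma> (Suc k) = pochhammer_logderiv \<sigma> k + 1 / (\<sigma> + 1 + real k)"
  by (simp add: pochhammer_logderiv_def)

lemma pochhammer_logderiv_nonneg: "0 \<le> \<sigma> \<Longrightarrow> 0 \<le> pochhammer_logderiv \<sigma> k"
  unfolding pochhammer_logderiv_def by (intro sum_nonneg) auto

lemma pochhammer_logderiv_le: "0 \<le> \<sigma> \<Longrightarrow> pochhammer_logderiv \<sigma> k \<le> real k"
proof -
  assume "0 \<le> \<sigma>"
  then have "pochhammer_logderiv \<sigma> k \<le> (\<Sum>j<k. 1)"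
    unfolding pochhammer_logderiv_def by (intro sum_mono) auto
  then show ?thesis by simp
qed

lemma pochhammer_logderiv_Suc_le_two_power: "0 \<le> \<sigma> \<Longrightarrow> pochhammer_logderiv \<sigma> (Suc k) \<le> 2^k"
proof -
  assume "0 \<le> \<sigma>"
  then have "pochhammer_logderiv \<sigma> (Suc k) \<le> real (Suc k)"
    by (rule pochhammer_logderiv_le)
  also have "\<dots> \<le> 2^k"
    using less_exp[of k] by (metis Suc_leI numeral_power_eq_of_nat_cancel_iff of_nat_le_iff)
  finally show ?thesis .
qed

lemma pochhammer_logderiv_le_two_power: "0 \<le> \<sigma> \<Longrightarrow> pochhammer_logderiv \<sigma> k \<le> 2^k"
proof -
  assume "0 \<le> \<sigma>"
  then have "0 \<le> 1 / (\<sigma> + 1 + real k)"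
    by simp
  with pochhammer_logderiv_Suc_le_two_power[OF \<open>0 \<le> \<sigma>\<close>, of k] show ?thesis
    unfolding pochhammer_logderiv_Suc by linarith
qed

lemma pochhammer_logderiv_Suc_Suc_le:
  assumes "0 \<le> \<sigma>"
  shows "pochhammer_logderiv \<sigma> (Suc (Suc k)) \<le> 2 * pochhammer_logderiv \<sigma> (Suc k)"
proof -
  have "1 / (\<sigma> + 1 + real (Suc k)) \<le> 1 / (\<sigma> + 1 + real k)"
    using assms by (simp add: divide_simps)
  also have "\<dots> \<le> pochhammer_logderiv \<sigma> (Suc k)"
    using pochhammer_logderiv_nonneg[OF assms, of k] by (simp add: pochhammer_logderiv_Suc)
  finally show ?thesis by (simp add: pochhammer_logderiv_Suc)
qed

lemma DERIV_bessel_coeff: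
  assumes "-1 < \<sigma>"
  shows "((\<lambda>\<sigma>. bessel_coeff \<sigma> k) has_real_derivative
    - bessel_coeff \<sigma> k * pochhammer_logderiv \<sigma> k) (at \<sigma>)"
proof (induction k)
  case 0
  then show ?case by (simp add: bessel_coeff_def pochhammer_logderiv_def)
next
  case (Suc k)
  define d where "d \<sigma> = (real k + 1) * (\<sigma> + 1 + real k)" for \<sigma>
  have "(d has_real_derivative (real k + 1)) (at \<sigma>)"
    unfolding d_def by (auto intro!: derivative_eq_intros)
  moreover have "d \<sigma> \<noteq> 0" "\<sigma> + 1 + real k \<noteq> 0"
    using assms by (auto simp: d_def)
  ultimately have "((\<lambda>\<sigma>. bessel_coeff \<sigma> k / d \<sigma>) has_real_derivative
      (- bessel_coeff \<sigma> k * pochhammer_logderiv \<sigma> k * d \<sigma> - bessel_coeff \<sigma> k * (real k + 1))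
        / (d \<sigma> * d \<sigma>)) (at \<sigma>)"
    using Suc by (intro DERIV_divide)
  also have "(- bessel_coeff \<sigma> k * pochhammer_logderiv \<sigma> k * d \<sigma> - bessel_coeff \<sigma> k * (real k + 1))
        / (d \<sigma> * d \<sigma>) = - bessel_coeff \<sigma> (Suc k) * pochhammer_logderiv \<sigma> (Suc k)"
  proof -
    have "\<And>A B P L::real. A \<noteq> 0 \<Longrightarrow> B \<noteq> 0 \<Longrightarrow>
        (- P * L * (A * B) - P * A) / ((A * B) * (A * B)) = - (P / (A * B)) * (L + 1 / B)"
      by (simp add: field_simps)
    from this[of "real k + 1" "\<sigma> + 1 + real k"] \<open>\<sigma> + 1 + real k \<noteq> 0\<close> show ?thesis
      by (simp add: bessel_coeff_Suc pochhammer_logderiv_Suc d_def)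
  qed
  finally show ?case
    by (simp add: bessel_coeff_Suc d_def)
qed

lemma DERIV_bessel_coeff_div:
  "-1 < \<sigma> \<Longrightarrow> ((\<lambda>\<sigma>. bessel_coeff \<sigma> k / (\<sigma> + 1 + real k)) has_real_derivative
     - (bessel_coeff \<sigma> k / (\<sigma> + 1 + real k)) * pochhammer_logderiv \<sigma> (Suc k)) (at \<sigma>)"
  unfolding bessel_coeff_div
  using DERIV_cmult[OF DERIV_bessel_coeff[of \<sigma> "Suc k"], of "real k + 1"] by (simp add: mult.assoc)

section \<open>The entire part of the Bessel function and its derivatives\<close>

text \<open>\<open>besselG_u\<close>, \<open>besselG_s\<close> and \<open>besselG_us\<close> are the partial derivatives of \<open>besselG \<sigma> u\<close>
  in \<open>u\<close>, in the order \<open>\<sigma>\<close>, and in both; \<open>besselH_s\<close> is the \<open>\<sigma>\<close>-derivative of \<open>besselH\<close>.\<close>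

definition besselG :: "real \<Rightarrow> real \<Rightarrow> real" where
  "besselG \<sigma> u = (\<Sum>k. (-1)^k * bessel_coeff \<sigma> k * u^k)"

definition besselG_u :: "real \<Rightarrow> real \<Rightarrow> real" where
  "besselG_u \<sigma> u = (\<Sum>k. (-1)^Suc k * (bessel_coeff \<sigma> k / (\<sigma> + 1 + real k)) * u^k)"

definition besselG_s :: "real \<Rightarrow> real \<Rightarrow> real" where
  "besselG_s \<sigma> u = (\<Sum>k. (-1)^Suc k * (bessel_coeff \<sigma> k * pochhammer_logderiv \<sigma> k) * u^k)"

definition besselG_us :: "real \<Rightarrow> real \<Rightarrow> real" where
  "besselG_us \<sigma> u =
    (\<Sum>k. (-1)^k * (bessel_coeff \<sigma> k / (\<sigma> + 1 + real k) * pochhammer_logderiv \<sigma> (Suc k)) * u^k)"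

definition besselH :: "real \<Rightarrow> real \<Rightarrow> real" where
  "besselH \<sigma> u = \<sigma> * besselG \<sigma> u + 2 * u * besselG_u \<sigma> u"

definition besselH_s :: "real \<Rightarrow> real \<Rightarrow> real" where
  "besselH_s \<sigma> u = besselG \<sigma> u + \<sigma> * besselG_s \<sigma> u + 2 * u * besselG_us \<sigma> u"

lemma summable_besselG: "0 \<le> \<sigma> \<Longrightarrow> summable (\<lambda>k. (-1)^k * bessel_coeff \<sigma> k * u^k)"
proof (rule summable_comparison_test'[OF summable_exp[of "\<bar>u\<bar>"]])
  fix k assume "0 \<le> \<sigma>"
  then show "norm ((-1)^k * bessel_coeff \<sigma> k * u^k) \<le> inverse (fact k) * \<bar>u\<bar>^k"
    using bessel_coeff_pos[of \<sigma> k] bessel_coeff_le[of \<sigma> k]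
    by (auto simp: abs_mult power_abs divide_inverse intro!: mult_right_mono)
qed

lemma diffs_besselG_coeff:
  "diffs (\<lambda>k. (-1)^k * bessel_coeff \<sigma> k) = (\<lambda>k. (-1)^Suc k * (bessel_coeff \<sigma> k / (\<sigma> + 1 + real k)))"
  by (simp add: diffs_def bessel_coeff_div fun_eq_iff)

lemma DERIV_besselG_wrt_u: "0 \<le> \<sigma> \<Longrightarrow> (besselG \<sigma> has_real_derivative besselG_u \<sigma> u) (at u)"
  using termdiffs_strong_converges_everywhere[OF summable_besselG]
  unfolding besselG_def[abs_def] besselG_u_def diffs_besselG_coeff .

lemma isCont_besselG: "0 \<le> \<sigma> \<Longrightarrow> isCont (besselG \<sigma>) u"
  using DERIV_besselG_wrt_u by (rule DERIV_isCont)

lemma isCont_besselG_u: "0 \<le> \<sigma> \<Longrightarrow> isCont (besselG_u \<sigma>) u"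
proof -
  assume "0 \<le> \<sigma>"
  let ?c = "diffs (\<lambda>k. (-1)^k * bessel_coeff \<sigma> k)"
  have "summable (\<lambda>k. ?c k * y^k)" for y
    by (rule termdiff_converges_all) (rule summable_besselG[OF \<open>0 \<le> \<sigma>\<close>])
  then have "((\<lambda>u. \<Sum>k. ?c k * u^k) has_real_derivative (\<Sum>k. diffs ?c k * u^k)) (at u)"
    by (rule termdiffs_strong_converges_everywhere)
  then show ?thesis
    unfolding besselG_u_def[abs_def] diffs_besselG_coeff by (rule DERIV_isCont)
qed

lemma besselG_0 [simp]: "besselG \<sigma> 0 = 1"
  using powser_zero[of "\<lambda>k. (-1)^k * bessel_coeff \<sigma> k"] by (simp add: besselG_def)

lemma besselH_0 [simp]: "besselH \<sigma> 0 = \<sigma>"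
  by (simp add: besselH_def)

lemma isCont_besselH: "0 \<le> \<sigma> \<Longrightarrow> isCont (besselH \<sigma>) u"
  unfolding besselH_def[abs_def]
  by (intro continuous_intros isCont_besselG isCont_besselG_u)

lemma bessel_coeff_logderiv_le:
  assumes "0 \<le> \<sigma>"
  shows "bessel_coeff \<sigma> k * pochhammer_logderiv \<sigma> k \<le> 2^k / fact k"
proof -
  have "pochhammer_logderiv \<sigma> k \<le> 2^k"
    using assms by (rule pochhammer_logderiv_le_two_power)
  then have "bessel_coeff \<sigma> k * pochhammer_logderiv \<sigma> k \<le> 1 / fact k * 2^k"
    using bessel_coeff_le[OF assms, of k] pochhammer_logderiv_nonneg[OF assms, of k]
    by (intro mult_mono) auto
  then show ?thesis by simp
qed

lemma bessel_coeff_div_logderiv_le: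
  assumes "0 \<le> \<sigma>"
  shows "bessel_coeff \<sigma> k / (\<sigma> + 1 + real k) * pochhammer_logderiv \<sigma> (Suc k) \<le> 2^k / fact k"
proof -
  have "bessel_coeff \<sigma> k / (\<sigma> + 1 + real k) \<le> bessel_coeff \<sigma> k"
    using divide_left_mono[of 1 "\<sigma> + 1 + real k" "bessel_coeff \<sigma> k"] bessel_coeff_pos[of \<sigma> k] assms
    by simp
  also have "\<dots> \<le> 1 / fact k"
    using bessel_coeff_le[OF assms] .
  finally have "bessel_coeff \<sigma> k / (\<sigma> + 1 + real k) * pochhammer_logderiv \<sigma> (Suc k) \<le> 1 / fact k * 2^k"
    using pochhammer_logderiv_Suc_le_two_power[OF assms, of k]
      pochhammer_logderiv_nonneg[OF assms, of "Suc k"]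
    by (intro mult_mono) auto
  then show ?thesis by simp
qed

lemma DERIV_besselG_wrt_order:
  assumes "0 < \<sigma>"
  shows "((\<lambda>\<sigma>. besselG \<sigma> u) has_real_derivative besselG_s \<sigma> u) (at \<sigma>)"
  unfolding besselG_def besselG_s_def
proof (rule DERIV_powser_wrt_parameter[where S = "{0<..}" and C = 2])
  fix k and y :: real assume "y \<in> {0<..}"
  then show "((\<lambda>\<sigma>. (-1)^k * bessel_coeff \<sigma> k) has_real_derivative
      (-1)^Suc k * (bessel_coeff y k * pochhammer_logderiv y k)) (at y)"
    using DERIV_cmult[OF DERIV_bessel_coeff[of y k], of "(-1)^k"] by simp
  show "\<bar>(-1)^Suc k * (bessel_coeff y k * pochhammer_logderiv y k)\<bar> \<le> 2^k / fact k"
    using \<open>y \<in> {0<..}\<close> bessel_coeff_logderiv_le[of y k] bessel_coeff_pos[of y k]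
      pochhammer_logderiv_nonneg[of y k]
    by (simp add: abs_mult)
qed (use assms summable_besselG in auto)

lemma DERIV_besselG_u_wrt_order:
  assumes "0 < \<sigma>"
  shows "((\<lambda>\<sigma>. besselG_u \<sigma> u) has_real_derivative besselG_us \<sigma> u) (at \<sigma>)"
  unfolding besselG_u_def besselG_us_def
proof (rule DERIV_powser_wrt_parameter[where S = "{0<..}" and C = 2])
  fix k and y :: real assume "y \<in> {0<..}"
  then show "((\<lambda>\<sigma>. (-1)^Suc k * (bessel_coeff \<sigma> k / (\<sigma> + 1 + real k))) has_real_derivative
      (-1)^k * (bessel_coeff y k / (y + 1 + real k) * pochhammer_logderiv y (Suc k))) (at y)"
    using DERIV_cmult[OF DERIV_bessel_coeff_div[of y k], of "(-1)^Suc k"] by simp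
  show "\<bar>(-1)^k * (bessel_coeff y k / (y + 1 + real k) * pochhammer_logderiv y (Suc k))\<bar> \<le> 2^k / fact k"
    using \<open>y \<in> {0<..}\<close> bessel_coeff_div_logderiv_le[of y k] bessel_coeff_pos[of y k]
      pochhammer_logderiv_nonneg[of y "Suc k"]
    by (simp add: abs_mult)
next
  show "summable (\<lambda>k. (-1)^Suc k * (bessel_coeff \<sigma> k / (\<sigma> + 1 + real k)) * u^k)"
    using termdiff_converges_all[OF summable_besselG] assms
    unfolding diffs_besselG_coeff by simp
qed (use assms in auto)

lemma DERIV_besselH_wrt_order:
  "0 < \<sigma> \<Longrightarrow> ((\<lambda>\<sigma>. besselH \<sigma> u) has_real_derivative besselH_s \<sigma> u) (at \<sigma>)"
  unfolding besselH_def[abs_def] besselH_s_def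
  by (auto intro!: derivative_eq_intros DERIV_besselG_wrt_order DERIV_besselG_u_wrt_order)

section \<open>Signs for order at least one and \<open>0 \<le> u \<le> 1\<close>\<close>

context
  fixes \<sigma> u :: real
  assumes order_ge_1: "1 \<le> \<sigma>" and u_nonneg: "0 \<le> u" and u_le_1: "u \<le> 1"
begin

lemma bessel_term_nonneg: "0 \<le> bessel_coeff \<sigma> k * u^k"
  using bessel_coeff_pos[of \<sigma> k] order_ge_1 u_nonneg by simp

lemma bessel_term_halving: "2 * (bessel_coeff \<sigma> (Suc k) * u^Suc k) \<le> bessel_coeff \<sigma> k * u^k"
proof -
  define D where "D = (real k + 1) * (\<sigma> + 1 + real k)"
  have "1 * 2 \<le> D"
    unfolding D_def using order_ge_1 by (intro mult_mono) auto
  then have "2 * (u / D) \<le> 1"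
    using u_le_1 by (simp add: divide_simps)
  moreover have "bessel_coeff \<sigma> (Suc k) * u^Suc k = bessel_coeff \<sigma> k * u^k * (u / D)"
    by (simp add: bessel_coeff_Suc D_def)
  ultimately show ?thesis
    using mult_left_mono[OF _ bessel_term_nonneg, of "2 * (u / D)" 1 k] by (simp add: mult_ac)
qed

lemma summable_bessel_term: "summable (\<lambda>k. bessel_coeff \<sigma> k * u^k * c k)"
  if "\<And>k. 0 \<le> c k" "\<And>k. c k \<le> 2^k" for c :: "nat \<Rightarrow> real"
proof (rule summable_comparison_test'[OF summable_exp[of "2 * u"]])
  fix k
  have "bessel_coeff \<sigma> k * u^k * c k \<le> inverse (fact k) * u^k * 2^k"
    using bessel_coeff_le[of \<sigma> k] order_ge_1 u_nonneg that
    by (intro mult_mono mult_right_mono) (auto simp: divide_inverse)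
  then show "norm (bessel_coeff \<sigma> k * u^k * c k) \<le> inverse (fact k) * (2 * u)^k"
    using bessel_term_nonneg[of k] that(1)[of k] by (simp add: power_mult_distrib mult_ac)
qed

lemma besselG_bounds:
  shows besselG_lower: "1 - u / (\<sigma> + 1) \<le> besselG \<sigma> u"
    and besselG_upper: "besselG \<sigma> u \<le> 1 - u / (\<sigma> + 1) + u^2 / (2 * (\<sigma> + 1) * (\<sigma> + 2))"
proof -
  let ?a = "\<lambda>k. bessel_coeff \<sigma> k * u^k"
  have antitone: "?a (Suc k) \<le> ?a k" for k
    using bessel_term_halving[of k] bessel_term_nonneg[of "Suc k"] by linarith
  have "?a \<longlonglongrightarrow> 0"
    using summable_LIMSEQ_zero[OF summable_bessel_term[of "\<lambda>_. 1"]] by simp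
  note bounds = alternating_series_bounds[OF bessel_term_nonneg antitone this]
  have "besselG \<sigma> u = (\<Sum>k. (-1)^k * ?a k)"
    by (simp add: besselG_def mult.assoc)
  moreover have "?a 1 = u / (\<sigma> + 1)" "?a 2 = u^2 / (2 * (\<sigma> + 1) * (\<sigma> + 2))"
    using bessel_coeff_Suc[of \<sigma> 0] bessel_coeff_Suc[of \<sigma> 1]
    by (simp_all add: numeral_2_eq_2 field_simps)
  ultimately show "1 - u / (\<sigma> + 1) \<le> besselG \<sigma> u"
    and "besselG \<sigma> u \<le> 1 - u / (\<sigma> + 1) + u^2 / (2 * (\<sigma> + 1) * (\<sigma> + 2))"
    using bounds(3,4) by simp_all
qed

lemma besselG_pos: "0 < besselG \<sigma> u"
proof -
  have "u / (\<sigma> + 1) \<le> 1 / 2"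
    using order_ge_1 u_le_1 by (simp add: divide_simps)
  then show ?thesis
    using besselG_lower by simp
qed

lemma besselG_u_bounds:
  shows besselG_u_nonpos: "besselG_u \<sigma> u \<le> 0"
    and besselG_u_upper: "besselG_u \<sigma> u \<le> - 1 / (\<sigma> + 1) + u / ((\<sigma> + 1) * (\<sigma> + 2))"
proof -
  let ?c = "\<lambda>k. 1 / (\<sigma> + 1 + real k)"
  let ?m = "\<lambda>k. bessel_coeff \<sigma> k * u^k * ?c k"
  have "?c (Suc k) \<le> 2 * ?c k" for k
    using order_ge_1 by (simp add: divide_simps)
  then have antitone: "?m (Suc k) \<le> ?m k" for k
    using mult_Suc_le_of_halving[where a = "\<lambda>k. bessel_coeff \<sigma> k * u^k" and c = ?c,
        OF bessel_term_nonneg bessel_term_halving] order_ge_1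
    by (simp add: mult.assoc)
  have nonneg: "0 \<le> ?m k" for k
    using bessel_term_nonneg[of k] order_ge_1 by simp
  have "?m \<longlonglongrightarrow> 0"
  proof (intro summable_LIMSEQ_zero summable_bessel_term)
    fix k
    show "0 \<le> ?c k"
      using order_ge_1 by simp
    have "?c k \<le> 1"
      using order_ge_1 by simp
    also have "1 \<le> (2::real)^k"
      by simp
    finally show "?c k \<le> 2^k" .
  qed
  note bounds = alternating_series_bounds[OF nonneg antitone this]
  have "besselG_u \<sigma> u = (\<Sum>k. - ((-1)^k * ?m k))"
    by (simp add: besselG_u_def mult.assoc)
  also have "\<dots> = - (\<Sum>k. (-1)^k * ?m k)"
    using bounds(1) by (rule suminf_minus)
  finally have "besselG_u \<sigma> u = - (\<Sum>k. (-1)^k * ?m k)" .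
  moreover have "?m 0 = 1 / (\<sigma> + 1)" "?m 1 = u / ((\<sigma> + 1) * (\<sigma> + 2))"
    using bessel_coeff_Suc[of \<sigma> 0] by (simp_all add: field_simps)
  ultimately show "besselG_u \<sigma> u \<le> 0"
    and "besselG_u \<sigma> u \<le> - 1 / (\<sigma> + 1) + u / ((\<sigma> + 1) * (\<sigma> + 2))"
    using bounds(2,3) by simp_all
qed

lemma besselG_s_nonneg: "0 \<le> besselG_s \<sigma> u"
proof -
  let ?a = "\<lambda>k. bessel_coeff \<sigma> (Suc k) * u^Suc k"
  let ?c = "\<lambda>k. pochhammer_logderiv \<sigma> (Suc k)"
  let ?m = "\<lambda>k. ?a k * ?c k"
  let ?f = "\<lambda>k. (-1)^Suc k * (bessel_coeff \<sigma> k * pochhammer_logderiv \<sigma> k) * u^k"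
  have shift: "(\<lambda>k. ?f (Suc k)) = (\<lambda>k. (-1)^k * ?m k)"
    by (simp add: fun_eq_iff mult_ac)
  have c_nonneg: "0 \<le> ?c k" for k
    using pochhammer_logderiv_nonneg order_ge_1 by simp
  have antitone: "?m (Suc k) \<le> ?m k" for k
    using order_ge_1
    by (intro mult_Suc_le_of_halving[where a = ?a and c = ?c] bessel_term_nonneg bessel_term_halving
        c_nonneg pochhammer_logderiv_Suc_Suc_le) simp
  have nonneg: "0 \<le> ?m k" for k
    by (intro mult_nonneg_nonneg bessel_term_nonneg c_nonneg)
  have "summable (\<lambda>k. bessel_coeff \<sigma> k * u^k * pochhammer_logderiv \<sigma> k)"
    using order_ge_1
    by (intro summable_bessel_term pochhammer_logderiv_nonneg pochhammer_logderiv_le_two_power) simp_all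
  then have "?m \<longlonglongrightarrow> 0"
    using summable_Suc_iff[where f = "\<lambda>k. bessel_coeff \<sigma> k * u^k * pochhammer_logderiv \<sigma> k"]
    by (intro summable_LIMSEQ_zero) simp
  note bounds = alternating_series_bounds[OF nonneg antitone this]
  have "summable ?f"
    using bounds(1) unfolding summable_Suc_iff[of ?f, symmetric] shift .
  then have "(\<Sum>k. ?f (Suc k)) = besselG_s \<sigma> u - ?f 0"
    unfolding besselG_s_def by (rule suminf_split_head)
  then have "besselG_s \<sigma> u = (\<Sum>k. ?f (Suc k))"
    by (simp add: pochhammer_logderiv_def)
  then show ?thesis
    using bounds(2) unfolding shift by simp
qed

lemma besselG_us_nonneg: "0 \<le> besselG_us \<sigma> u"
proof -
  let ?c = "\<lambda>k. pochhammer_logderiv \<sigma> (Suc k) / (\<sigma> + 1 + real k)"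
  let ?m = "\<lambda>k. bessel_coeff \<sigma> k * u^k * ?c k"
  have c_nonneg: "0 \<le> ?c k" for k
    using pochhammer_logderiv_nonneg order_ge_1 by simp
  have "?c (Suc k) \<le> 2 * ?c k" for k
  proof -
    have "?c (Suc k) \<le> 2 * pochhammer_logderiv \<sigma> (Suc k) / (\<sigma> + 1 + real k)"
      using order_ge_1 pochhammer_logderiv_Suc_Suc_le[of \<sigma> k] pochhammer_logderiv_nonneg[of \<sigma>]
      by (intro frac_le) auto
    then show ?thesis by simp
  qed
  then have antitone: "?m (Suc k) \<le> ?m k" for k
    using mult_Suc_le_of_halving[where a = "\<lambda>k. bessel_coeff \<sigma> k * u^k" and c = ?c,
        OF bessel_term_nonneg bessel_term_halving c_nonneg]
    by simp
  have nonneg: "0 \<le> ?m k" for k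
    by (intro mult_nonneg_nonneg bessel_term_nonneg c_nonneg)
  have "?c k \<le> 2^k" for k
  proof -
    have "?c k \<le> pochhammer_logderiv \<sigma> (Suc k)"
      using divide_left_mono[of 1 "\<sigma> + 1 + real k" "pochhammer_logderiv \<sigma> (Suc k)"]
        order_ge_1 pochhammer_logderiv_nonneg[of \<sigma> "Suc k"]
      by simp
    also have "\<dots> \<le> 2^k"
      using order_ge_1 by (intro pochhammer_logderiv_Suc_le_two_power) simp
    finally show ?thesis .
  qed
  then have "?m \<longlonglongrightarrow> 0"
    by (intro summable_LIMSEQ_zero summable_bessel_term c_nonneg)
  note bounds = alternating_series_bounds[OF nonneg antitone this]
  have "besselG_us \<sigma> u = (\<Sum>k. (-1)^k * ?m k)"
    by (simp add: besselG_us_def mult_ac)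
  then show ?thesis
    using bounds(2) by simp
qed

lemma besselG_wronskian_pos: "0 < besselG \<sigma> u * besselH_s \<sigma> u - besselH \<sigma> u * besselG_s \<sigma> u"
proof -
  have "besselG \<sigma> u * besselH_s \<sigma> u - besselH \<sigma> u * besselG_s \<sigma> u
      = besselG \<sigma> u ^ 2 + 2 * u * (besselG \<sigma> u * besselG_us \<sigma> u - besselG_u \<sigma> u * besselG_s \<sigma> u)"
    by (simp add: besselH_def besselH_s_def algebra_simps power2_eq_square)
  moreover have "0 \<le> besselG \<sigma> u * besselG_us \<sigma> u"
    using besselG_pos besselG_us_nonneg by simp
  moreover have "besselG_u \<sigma> u * besselG_s \<sigma> u \<le> 0"
    using besselG_u_nonpos besselG_s_nonneg by (rule mult_nonpos_nonneg)
  ultimately show ?thesis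
    using besselG_pos u_nonneg by (simp add: add_pos_nonneg)
qed

end

lemma besselJ_eq_besselG:
  assumes "0 \<le> \<sigma>" and "0 < t"
  shows "besselJ \<sigma> t = (t/2) powr \<sigma> * rGamma (\<sigma> + 1) * besselG \<sigma> (t^2/4)"
proof -
  let ?C = "(t/2) powr \<sigma> * rGamma (\<sigma> + 1)"
  have summand: "(-1)^k * rGamma (real k + \<sigma> + 1) / fact k * (t/2) powr (2 * real k + \<sigma>)
      = ?C * ((-1)^k * bessel_coeff \<sigma> k * (t^2/4)^k)" for k
  proof -
    have "pochhammer (\<sigma> + 1) k \<noteq> 0"
      using pochhammer_pos[of "\<sigma> + 1" k] assms(1) by simp
    then have rGamma_eq: "rGamma (real k + \<sigma> + 1) = rGamma (\<sigma> + 1) / pochhammer (\<sigma> + 1) k"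
      using pochhammer_rGamma[of "\<sigma> + 1" k] by (simp add: field_simps add_ac)
    have "(t/2) powr (2 * real k + \<sigma>) = (t/2) powr (real (2 * k)) * (t/2) powr \<sigma>"
      by (simp add: powr_add)
    also have "\<dots> = (t/2)^(2 * k) * (t/2) powr \<sigma>"
      using assms(2) by (subst powr_realpow) auto
    also have "\<dots> = (t^2/4)^k * (t/2) powr \<sigma>"
      by (simp add: power_mult power_divide)
    finally have powr_eq: "(t/2) powr (2 * real k + \<sigma>) = (t^2/4)^k * (t/2) powr \<sigma>" .
    show ?thesis
      unfolding rGamma_eq bessel_coeff_def powr_eq by (simp add: field_simps)
  qed
  have "besselJ \<sigma> t = (\<Sum>k. ?C * ((-1)^k * bessel_coeff \<sigma> k * (t^2/4)^k))"
    unfolding besselJ_def summand ..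
  also have "\<dots> = ?C * besselG \<sigma> (t^2/4)"
    unfolding besselG_def by (rule suminf_mult[OF summable_besselG[OF assms(1)]])
  finally show ?thesis .
qed

lemma t_mult_besselJ'_eq_besselH:
  assumes "0 \<le> \<sigma>" and "0 < t"
  shows "t * besselJ' \<sigma> t = (t/2) powr \<sigma> * rGamma (\<sigma> + 1) * besselH \<sigma> (t^2/4)"
proof -
  have powr_deriv: "((\<lambda>x. (x/2) powr \<sigma>) has_real_derivative \<sigma> * (t/2) powr \<sigma> / t) (at t)"
  proof -
    have "((\<lambda>x. x/2) has_real_derivative 1/2) (at t)"
      by (auto intro!: derivative_eq_intros)
    then have "((\<lambda>x. (x/2) powr \<sigma>) has_real_derivative \<sigma> * (t/2) powr (\<sigma> - 1) * (1/2)) (at t)"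
      using assms(2) DERIV_fun_powr[of "\<lambda>x. x/2" "1/2" t \<sigma>] by simp
    moreover have "\<sigma> * (t/2) powr (\<sigma> - 1) * (1/2) = \<sigma> * (t/2) powr \<sigma> / t"
      using assms(2) by (simp add: powr_diff field_simps)
    ultimately show ?thesis
      by simp
  qed
  have besselG_deriv: "((\<lambda>x. besselG \<sigma> (x^2/4)) has_real_derivative besselG_u \<sigma> (t^2/4) * (t/2)) (at t)"
    by (rule DERIV_chain2[OF DERIV_besselG_wrt_u[OF assms(1)]]) (auto intro!: derivative_eq_intros)
  have "((\<lambda>x. (x/2) powr \<sigma> * rGamma (\<sigma> + 1) * besselG \<sigma> (x^2/4)) has_real_derivative
      \<sigma> * (t/2) powr \<sigma> / t * rGamma (\<sigma> + 1) * besselG \<sigma> (t^2/4)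
      + (t/2) powr \<sigma> * rGamma (\<sigma> + 1) * (besselG_u \<sigma> (t^2/4) * (t/2))) (at t)"
    using DERIV_mult[OF DERIV_cmult_right[OF powr_deriv, of "rGamma (\<sigma> + 1)"] besselG_deriv]
    by (simp add: mult_ac)
  then have "(besselJ \<sigma> has_real_derivative
      \<sigma> * (t/2) powr \<sigma> / t * rGamma (\<sigma> + 1) * besselG \<sigma> (t^2/4)
      + (t/2) powr \<sigma> * rGamma (\<sigma> + 1) * (besselG_u \<sigma> (t^2/4) * (t/2))) (at t)"
    by (rule has_field_derivative_transform_within_open[of _ _ _ "{0<..}"])
       (use assms besselJ_eq_besselG in auto)
  then show ?thesis
    unfolding besselJ'_def besselH_def using assms(2)
    by (simp add: DERIV_imp_deriv field_simps power2_eq_square)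
qed

lemma besselJ_div_besselJ'_eq:
  assumes "0 \<le> \<sigma>" and "0 < t"
  shows "besselJ \<sigma> t / (t * besselJ' \<sigma> t) = besselG \<sigma> (t^2/4) / besselH \<sigma> (t^2/4)"
proof -
  have "(t/2) powr \<sigma> * rGamma (\<sigma> + 1) \<noteq> 0"
  proof -
    have "0 < Gamma (\<sigma> + 1)"
      using assms(1) by simp
    then show ?thesis
      using assms(2) by (simp add: rGamma_inverse_Gamma)
  qed
  then show ?thesis
    unfolding besselJ_eq_besselG[OF assms] t_mult_besselJ'_eq_besselH[OF assms] by simp
qed

lemma besselJ'_1_eq_0_iff:
  assumes "0 < t"
  shows "besselJ' 1 t = 0 \<longleftrightarrow> besselH 1 (t^2/4) = 0"
proof -
  have "2 * besselJ' 1 t = besselH 1 (t^2/4)"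
    using t_mult_besselJ'_eq_besselH[of 1 t] rGamma_plus1[of "1::real"] assms by simp
  then show ?thesis
    by auto
qed

lemma besselH_1_1_neg: "besselH 1 1 < 0"
  using besselG_upper[of 1 1] besselG_u_upper[of 1 1] by (simp add: besselH_def)

lemma j1'_le_of_besselH_nonpos:
  assumes "0 \<le> x" and "besselH 1 (x^2/4) \<le> 0"
  shows "j1' \<le> x"
proof -
  have "\<exists>y. 0 \<le> y \<and> y \<le> x \<and> besselH 1 (y^2/4) = 0"
    using assms by (intro IVT2) (auto intro!: continuous_intros isCont_o2[OF _ isCont_besselH])
  then obtain y where y: "0 \<le> y" "y \<le> x" "besselH 1 (y^2/4) = 0"
    by blast
  have "y \<noteq> 0"
    using y(3) by auto
  with y have "y \<in> {z. 0 < z \<and> besselJ' 1 z = 0}"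
    using besselJ'_1_eq_0_iff[of y] by simp
  then have "j1' \<le> y"
    unfolding j1'_def by (rule cInf_lower) (rule bdd_belowI[of _ 0], simp)
  with y(2) show ?thesis
    by simp
qed

lemma j1'_le_2: "j1' \<le> 2"
  using j1'_le_of_besselH_nonpos[of 2] besselH_1_1_neg by simp

lemma besselH_1_pos: "0 < t \<Longrightarrow> t < j1' \<Longrightarrow> 0 < besselH 1 (t^2/4)"
  using j1'_le_of_besselH_nonpos[of t] by force

lemma besselH_pos:
  assumes "1 \<le> s" "0 \<le> u" "u \<le> 1" and "0 < besselH 1 u"
  shows "0 < besselH s u"
proof (cases "s = 1")
  case False
  let ?q = "\<lambda>\<sigma>. besselH \<sigma> u / besselG \<sigma> u"
  have "?q 1 < ?q s"
  proof (rule DERIV_pos_imp_increasing[of 1 s ?q])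
    show "1 < s"
      using assms(1) False by simp
    fix x assume x: "1 \<le> x" "x \<le> s"
    let ?D = "(besselH_s x u * besselG x u - besselH x u * besselG_s x u) / (besselG x u * besselG x u)"
    have "DERIV ?q x :> ?D"
      using besselG_pos[OF x(1) assms(2,3)] x(1)
      by (intro DERIV_divide DERIV_besselH_wrt_order DERIV_besselG_wrt_order) auto
    moreover have "0 < ?D"
      using besselG_wronskian_pos[OF x(1) assms(2,3)] besselG_pos[OF x(1) assms(2,3)]
      by (simp add: mult.commute)
    ultimately show "\<exists>y. DERIV ?q x :> y \<and> 0 < y"
      by blast
  qed
  moreover have "0 < ?q 1"
    using assms(2-4) besselG_pos[of 1 u] by simp
  ultimately have "0 < ?q s"
    by linarith
  then show ?thesis
    using besselG_pos[OF assms(1-3)] by (simp add: zero_less_divide_iff)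
qed (use assms in simp)

theorem lemma6p1:
  fixes t s :: real
  assumes "0 < t" and "t < j1'" and "1 \<le> s"
  shows "\<exists>D. ((\<lambda>\<sigma>. besselJ \<sigma> t / (t * besselJ' \<sigma> t)) has_real_derivative D) (at s) \<and> D < 0"
proof -
  define u where "u = t^2/4"
  have "0 \<le> u"
    by (simp add: u_def)
  moreover have "u \<le> 1"
    using assms(1,2) j1'_le_2 power_strict_mono[of t 2 2] by (simp add: u_def)
  ultimately have H_pos: "0 < besselH s u"
    using besselH_pos[OF assms(3)] besselH_1_pos[OF assms(1,2)] by (simp add: u_def)
  let ?D = "(besselG_s s u * besselH s u - besselG s u * besselH_s s u) / (besselH s u * besselH s u)"
  have "((\<lambda>\<sigma>. besselG \<sigma> u / besselH \<sigma> u) has_real_derivative ?D) (at s)"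
    using assms(3) H_pos by (intro DERIV_divide DERIV_besselG_wrt_order DERIV_besselH_wrt_order) auto
  then have "((\<lambda>\<sigma>. besselJ \<sigma> t / (t * besselJ' \<sigma> t)) has_real_derivative ?D) (at s)"
    by (rule has_field_derivative_transform_within_open[of _ _ _ "{0<..}"])
       (use assms besselJ_div_besselJ'_eq in \<open>auto simp: u_def\<close>)
  moreover have "?D < 0"
    using besselG_wronskian_pos[OF assms(3) \<open>0 \<le> u\<close> \<open>u \<le> 1\<close>] H_pos
    by (simp add: divide_neg_pos mult.commute)
  ultimately show ?thesis
    by blast
qed

end
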